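(* Let $\mathcal{K}$ be a Hilbert space and let $A$ be a formally normal operator in $\mathcal{K}$. Suppose there exists a normal operator $N$ in $\mathcal{K}$ with spectral measure $E$ such that $$\mathcal{B}(N):=\bigcup_{n\in\mathbb{N}}\mathcal{R}(E(n\mathbb{D}))\subseteq\mathcal{D}(A)$$ and $$\sup_{n\in\mathbb{N}}\|AE(n\mathbb{D})-E(n\mathbb{D})A\|<+\infty.$$ Then $A$ is essentially normal.
   Context: $\mathbb{D}$ is the closed unit disc in $\mathbb{C}$. A closable densely defined operator $A$ is formally normal if $\mathcal{D}(A)\subseteq\mathcal{D}(A^* )$ and $\|A^*f\|=\|Af\|$ for all $f\in\mathcal{D}(A)$; it is normal if moreover $\mathcal{D}(A)=\mathcal{D}(A^* )$; it is essentially normal if its closure $\bar A$ is normal. Products and differences of unbounded operators are taken on natural domains, and $\|S\|$ for a not necessarily everywhere defined operator means $\sup\{\|Sf\|: f\in\mathcal{D}(S),\|f\|\le1\}$. *)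

theory Defs
  imports "HOL-Analysis.Analysis"
begin

class chilbert = banach +
  fixes scaleC :: "complex \<Rightarrow> 'a \<Rightarrow> 'a"
    and cinner :: "'a \<Rightarrow> 'a \<Rightarrow> complex"
  assumes scaleC_of_real: "scaleC (of_real r) x = scaleR r x"
    and scaleC_add_right: "scaleC a (x + y) = scaleC a x + scaleC a y"
    and scaleC_add_left: "scaleC (a + b) x = scaleC a x + scaleC b x"
    and scaleC_scaleC: "scaleC a (scaleC b x) = scaleC (a * b) x"
    and cinner_add_left: "cinner (x + y) z = cinner x z + cinner y z"
    and cinner_scaleC_left: "cinner (scaleC a x) y = cnj a * cinner x y"
    and cinner_commute: "cinner x y = cnj (cinner y x)"
    and norm_cinner: "norm x = sqrt (Re (cinner x x))"

definition is_subspace :: "'a::chilbert set \<Rightarrow> bool" where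
  "is_subspace D \<longleftrightarrow> 0 \<in> D \<and> (\<forall>x\<in>D. \<forall>y\<in>D. x + y \<in> D) \<and> (\<forall>c. \<forall>x\<in>D. scaleC c x \<in> D)"

definition lin_op :: "'a::chilbert set \<Rightarrow> ('a \<Rightarrow> 'a) \<Rightarrow> bool" where
  "lin_op D A \<longleftrightarrow> is_subspace D \<and> (\<forall>x\<in>D. \<forall>y\<in>D. A (x + y) = A x + A y)
      \<and> (\<forall>c. \<forall>x\<in>D. A (scaleC c x) = scaleC c (A x))"

definition densely_defined :: "'a::chilbert set \<Rightarrow> bool" where
  "densely_defined D \<longleftrightarrow> closure D = UNIV"

definition adj_dom :: "'a::chilbert set \<Rightarrow> ('a \<Rightarrow> 'a) \<Rightarrow> 'a set" where
  "adj_dom D A = {g. \<exists>h. \<forall>f\<in>D. cinner (A f) g = cinner f h}"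

definition adj :: "'a::chilbert set \<Rightarrow> ('a \<Rightarrow> 'a) \<Rightarrow> 'a \<Rightarrow> 'a" where
  "adj D A g = (SOME h. \<forall>f\<in>D. cinner (A f) g = cinner f h)"

definition graph :: "'a set \<Rightarrow> ('a \<Rightarrow> 'a) \<Rightarrow> ('a \<times> 'a) set" where
  "graph D A = {(f, A f) | f. f \<in> D}"

definition closable :: "'a::chilbert set \<Rightarrow> ('a \<Rightarrow> 'a) \<Rightarrow> bool" where
  "closable D A \<longleftrightarrow> (\<forall>f g1 g2. (f, g1) \<in> closure (graph D A) \<and> (f, g2) \<in> closure (graph D A) \<longrightarrow> g1 = g2)"

definition closure_dom :: "'a::chilbert set \<Rightarrow> ('a \<Rightarrow> 'a) \<Rightarrow> 'a set" where
  "closure_dom D A = fst ` closure (graph D A)"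

definition closure_op :: "'a::chilbert set \<Rightarrow> ('a \<Rightarrow> 'a) \<Rightarrow> 'a \<Rightarrow> 'a" where
  "closure_op D A f = (THE g. (f, g) \<in> closure (graph D A))"

definition formally_normal :: "'a::chilbert set \<Rightarrow> ('a \<Rightarrow> 'a) \<Rightarrow> bool" where
  "formally_normal D A \<longleftrightarrow> lin_op D A \<and> densely_defined D \<and> closable D A
     \<and> D \<subseteq> adj_dom D A \<and> (\<forall>f\<in>D. norm (adj D A f) = norm (A f))"

definition normal_op :: "'a::chilbert set \<Rightarrow> ('a \<Rightarrow> 'a) \<Rightarrow> bool" where
  "normal_op D A \<longleftrightarrow> formally_normal D A \<and> D = adj_dom D A"

definition essentially_normal :: "'a::chilbert set \<Rightarrow> ('a \<Rightarrow> 'a) \<Rightarrow> bool" where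
  "essentially_normal D A \<longleftrightarrow> normal_op (closure_dom D A) (closure_op D A)"

definition orth_proj :: "('a::chilbert \<Rightarrow> 'a) \<Rightarrow> bool" where
  "orth_proj P \<longleftrightarrow> (\<forall>x y. P (x + y) = P x + P y) \<and> (\<forall>c x. P (scaleC c x) = scaleC c (P x))
     \<and> (\<forall>x. P (P x) = P x) \<and> (\<forall>x y. cinner (P x) y = cinner x (P y))"

definition spectral_measure :: "(complex set \<Rightarrow> 'a::chilbert \<Rightarrow> 'a) \<Rightarrow> bool" where
  "spectral_measure E \<longleftrightarrow>
     (\<forall>S\<in>sets borel. orth_proj (E S)) \<and> E UNIV = id
     \<and> (\<forall>S\<in>sets borel. \<forall>T\<in>sets borel. E (S \<inter> T) = E S \<circ> E T)
     \<and> (\<forall>F. range F \<subseteq> sets borel \<longrightarrow> disjoint_family F \<longrightarrow>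
            (\<forall>f. (\<lambda>n. \<Sum>i<n. E (F i) f) \<longlonglongrightarrow> E (\<Union>i. F i) f))"

text \<open>The scalar measure S \<mapsto> <E(S) f, f> = norm (E S f)^2.\<close>
definition spec_mu :: "(complex set \<Rightarrow> 'a::chilbert \<Rightarrow> 'a) \<Rightarrow> 'a \<Rightarrow> complex measure" where
  "spec_mu E f = measure_of UNIV (sets borel) (\<lambda>S. ennreal ((norm (E S f))\<^sup>2))"

text \<open>E is the spectral measure of N, i.e. N = \<integral> z dE(z):
D(N) = {f. \<integral>|z|^2 d<E f,f> < \<infinity>} and <f, N f> = \<integral> z d<E f, f> for f in D(N)
(N is linear, so by polarization this determines N).\<close>
definition spectral_measure_of ::
  "'a::chilbert set \<Rightarrow> ('a \<Rightarrow> 'a) \<Rightarrow> (complex set \<Rightarrow> 'a \<Rightarrow> 'a) \<Rightarrow> bool" where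
  "spectral_measure_of DN N E \<longleftrightarrow> spectral_measure E \<and> lin_op DN N
     \<and> DN = {f. (\<integral>\<^sup>+ z. ennreal ((cmod z)\<^sup>2) \<partial>spec_mu E f) < \<infinity>}
     \<and> (\<forall>f\<in>DN. cinner f (N f) = (\<integral> z. z \<partial>spec_mu E f))"

end

theory Submission
  imports Defs
begin

text \<open>The closure of a formally normal operator A is again formally normal and has the same
  adjoint, so A is essentially normal once the domain of the adjoint lies in the domain of the
  closure. For g in the domain of the adjoint, the vectors P n g, where P n is the spectral
  projection of the disc of radius n, lie in D and tend to g; moreover the norm of A (P n g)
  equals that of the adjoint applied to P n g, which is at most the norm of the adjoint at g
  plus the commutator bound times the norm of g. A graph sequence with bounded second
  components whose first components converge to g puts g into the domain of the closure; in a
  Hilbert space this is weak compactness, replaced here by a minimal-norm argument based on the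
  parallelogram law.\<close>

section \<open>Inner product geometry\<close>

lemma scaleC_zero_left [simp]: "scaleC 0 (x::'a::chilbert) = 0"
  using scaleC_of_real[of 0 x] by simp

lemma scaleC_minus1 [simp]: "scaleC (-1) (x::'a::chilbert) = - x"
  using scaleC_of_real[of "-1" x] by simp

lemma scaleR_eq_scaleC: "scaleR r (x::'a::chilbert) = scaleC (of_real r) x"
  by (simp add: scaleC_of_real)

lemma cinner_add_right: "cinner (x::'a::chilbert) (y + z) = cinner x y + cinner x z"
  by (metis cinner_add_left cinner_commute complex_cnj_add)

lemma cinner_scaleC_right: "cinner (x::'a::chilbert) (scaleC c y) = c * cinner x y"
  by (metis cinner_commute cinner_scaleC_left complex_cnj_cnj complex_cnj_mult)

lemma cinner_scaleR_right: "cinner (x::'a::chilbert) (scaleR r y) = of_real r * cinner x y"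
  by (simp add: scaleR_eq_scaleC cinner_scaleC_right)

lemma cinner_scaleR_left: "cinner (scaleR r x::'a::chilbert) y = of_real r * cinner x y"
  by (simp add: scaleR_eq_scaleC cinner_scaleC_left)

lemma cinner_diff_left: "cinner (x - y::'a::chilbert) z = cinner x z - cinner y z"
  using cinner_add_left[of x "-y" z] cinner_scaleC_left[of "-1" y z] by simp

lemma cinner_diff_right: "cinner (x::'a::chilbert) (y - z) = cinner x y - cinner x z"
  using cinner_add_right[of x y "-z"] cinner_scaleC_right[of x "-1" z] by simp

lemma cinner_self: "cinner (x::'a::chilbert) x = of_real ((norm x)\<^sup>2)"
proof -
  have "Im (cinner x x) = 0"
    using cinner_commute[of x x] by (metis Reals_cnj_iff complex_is_Real_iff)
  moreover have "Re (cinner x x) \<ge> 0"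
    using norm_cinner[of x] norm_ge_zero[of x] by (metis real_sqrt_less_mono real_sqrt_zero not_le)
  ultimately show ?thesis
    using norm_cinner[of x] by (simp add: complex_eq_iff)
qed

lemma Re_cinner_self: "Re (cinner (x::'a::chilbert) x) = (norm x)\<^sup>2"
  by (simp add: cinner_self)

lemma norm_add_square: "(norm (x + y::'a::chilbert))\<^sup>2 = (norm x)\<^sup>2 + 2 * Re (cinner x y) + (norm y)\<^sup>2"
proof -
  have "Re (cinner y x) = Re (cinner x y)" using cinner_commute[of y x] by simp
  then show ?thesis
    by (simp add: Re_cinner_self[symmetric] cinner_add_left cinner_add_right)
qed

lemma parallelogram_law:
  "(norm (x + y::'a::chilbert))\<^sup>2 + (norm (x - y))\<^sup>2 = 2 * (norm x)\<^sup>2 + 2 * (norm y)\<^sup>2"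
  using norm_add_square[of x y] norm_add_square[of x "-y"] cinner_scaleC_right[of x "-1" y]
  by simp

lemma norm_scaleC: "norm (scaleC c (x::'a::chilbert)) = cmod c * norm x"
proof -
  have "(norm (scaleC c x))\<^sup>2 = Re ((c * cnj c) * cinner x x)"
    using arg_cong[OF cinner_self[of "scaleC c x"], of Re]
    by (simp add: cinner_scaleC_left cinner_scaleC_right mult.assoc mult.left_commute)
  also have "\<dots> = (cmod c * norm x)\<^sup>2"
    by (simp add: complex_norm_square[symmetric] cinner_self power_mult_distrib)
  finally show ?thesis by (simp add: power2_eq_iff_nonneg)
qed

lemma Re_cinner_le: "Re (cinner (x::'a::chilbert) y) \<le> norm x * norm y"
proof (cases "y = 0")
  case True
  then show ?thesis using cinner_scaleC_right[of x 0 0] by simp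
next
  case False
  define R where "R = Re (cinner x y)"
  define n where "n = (norm y)\<^sup>2"
  have n: "n > 0" using False by (simp add: n_def)
  define t where "t = - R / n"
  have "0 \<le> (norm (x + scaleR t y))\<^sup>2" by simp
  also have "\<dots> = (norm x)\<^sup>2 + 2 * t * R + t\<^sup>2 * n"
    by (simp add: norm_add_square cinner_scaleR_right R_def n_def power_mult_distrib)
  also have "\<dots> = (norm x)\<^sup>2 - R\<^sup>2 / n"
    using n by (simp add: t_def field_simps power2_eq_square)
  finally have "R\<^sup>2 \<le> (norm x)\<^sup>2 * n" using n by (simp add: field_simps)
  then have "R\<^sup>2 \<le> (norm x * norm y)\<^sup>2" by (simp add: n_def power_mult_distrib)
  then show ?thesis unfolding R_def
    by (metis abs_le_square_iff abs_of_nonneg abs_ge_self mult_nonneg_nonneg norm_ge_zero order.trans)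
qed

lemma Cauchy_Schwarz_cinner: "cmod (cinner (x::'a::chilbert) y) \<le> norm x * norm y"
proof (cases "cinner x y = 0")
  case False
  define u where "u = cnj (cinner x y) / of_real (cmod (cinner x y))"
  have "u * cinner x y = (cinner x y * cnj (cinner x y)) / of_real (cmod (cinner x y))"
    by (simp add: u_def mult.commute)
  also have "\<dots> = of_real ((cmod (cinner x y))\<^sup>2) / of_real (cmod (cinner x y))"
    by (simp only: complex_norm_square)
  also have "\<dots> = of_real (cmod (cinner x y))"
    using False by (simp add: power2_eq_square)
  finally have "cmod (cinner x y) = Re (cinner x (scaleC u y))"
    by (simp add: cinner_scaleC_right)
  also have "\<dots> \<le> norm x * (cmod u * norm y)"
    using Re_cinner_le[of x "scaleC u y"] by (simp add: norm_scaleC)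
  also have "cmod u = 1"
    using False by (simp add: u_def norm_divide)
  finally show ?thesis by simp
qed simp

lemma bounded_bilinear_cinner: "bounded_bilinear (cinner :: 'a::chilbert \<Rightarrow> 'a \<Rightarrow> complex)"
proof
  fix a a' b b' :: 'a and r :: real
  show "cinner (a + a') b = cinner a b + cinner a' b" by (rule cinner_add_left)
  show "cinner a (b + b') = cinner a b + cinner a b'" by (rule cinner_add_right)
  show "cinner (scaleR r a) b = scaleR r (cinner a b)" by (simp add: cinner_scaleR_left scaleR_conv_of_real)
  show "cinner a (scaleR r b) = scaleR r (cinner a b)" by (simp add: cinner_scaleR_right scaleR_conv_of_real)
  show "\<exists>K. \<forall>a b::'a. cmod (cinner a b) \<le> norm a * norm b * K"
    using Cauchy_Schwarz_cinner by (metis mult.right_neutral)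
qed

lemmas tendsto_cinner = bounded_bilinear.tendsto[OF bounded_bilinear_cinner]

lemma bounded_linear_scaleC: "bounded_linear (scaleC c :: 'a::chilbert \<Rightarrow> 'a)"
proof
  fix x y :: 'a and r :: real
  show "scaleC c (x + y) = scaleC c x + scaleC c y" by (rule scaleC_add_right)
  show "scaleC c (scaleR r x) = scaleR r (scaleC c x)"
    by (simp add: scaleR_eq_scaleC scaleC_scaleC mult.commute)
  show "\<exists>K. \<forall>x::'a. norm (scaleC c x) \<le> norm x * K"
    by (metis norm_scaleC mult.commute order_refl)
qed

section \<open>Adjoints and closures of operators\<close>

lemma is_subspaceD:
  assumes "is_subspace (D::'a::chilbert set)"
  shows "0 \<in> D" "x \<in> D \<Longrightarrow> y \<in> D \<Longrightarrow> x + y \<in> D" "x \<in> D \<Longrightarrow> scaleC c x \<in> D"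
    "x \<in> D \<Longrightarrow> scaleR r x \<in> D" "x \<in> D \<Longrightarrow> y \<in> D \<Longrightarrow> x - y \<in> D"
  using assms scaleC_minus1[of y] unfolding is_subspace_def scaleR_eq_scaleC
  by (metis diff_conv_add_uminus)+

lemma lin_opD:
  assumes "lin_op D (A::'a::chilbert \<Rightarrow> 'a)"
  shows "A 0 = 0" "x \<in> D \<Longrightarrow> y \<in> D \<Longrightarrow> A (x + y) = A x + A y"
    "x \<in> D \<Longrightarrow> A (scaleC c x) = scaleC c (A x)" "x \<in> D \<Longrightarrow> A (scaleR r x) = scaleR r (A x)"
    "x \<in> D \<Longrightarrow> y \<in> D \<Longrightarrow> A (x - y) = A x - A y"
proof -
  have D: "is_subspace D" and add: "\<And>x y. x \<in> D \<Longrightarrow> y \<in> D \<Longrightarrow> A (x + y) = A x + A y"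
    and sc: "\<And>c x. x \<in> D \<Longrightarrow> A (scaleC c x) = scaleC c (A x)"
    using assms unfolding lin_op_def by blast+
  show "A 0 = 0" using sc[of 0 0] is_subspaceD(1)[OF D] by simp
  show "x \<in> D \<Longrightarrow> y \<in> D \<Longrightarrow> A (x + y) = A x + A y" by (rule add)
  show "x \<in> D \<Longrightarrow> A (scaleC c x) = scaleC c (A x)" by (rule sc)
  show "x \<in> D \<Longrightarrow> A (scaleR r x) = scaleR r (A x)" by (simp add: sc scaleR_eq_scaleC)
  show "x \<in> D \<Longrightarrow> y \<in> D \<Longrightarrow> A (x - y) = A x - A y"
    using add[of x "scaleC (-1) y"] sc[of y "-1"] is_subspaceD(3)[OF D, of y "-1"] by simp
qed

lemma dense_cinner_eq:
  assumes "densely_defined (D::'a::chilbert set)" and "\<And>f. f \<in> D \<Longrightarrow> cinner f h1 = cinner f h2"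
  shows "h1 = h2"
proof -
  obtain s where s: "\<And>n. s n \<in> D" "s \<longlonglongrightarrow> h1 - h2"
    using assms(1) closure_sequential unfolding densely_defined_def by blast
  have "(\<lambda>n. cinner (s n) (h1 - h2)) \<longlonglongrightarrow> cinner (h1 - h2) (h1 - h2)"
    by (rule tendsto_cinner[OF s(2) tendsto_const])
  moreover have "(\<lambda>n. cinner (s n) (h1 - h2)) = (\<lambda>n. 0)"
    using s(1) assms(2) by (simp add: cinner_diff_right)
  ultimately have "cinner (h1 - h2) (h1 - h2) = 0"
    using LIMSEQ_unique tendsto_const by metis
  then show ?thesis by (simp add: cinner_self)
qed

lemma dense_cinner_bound:
  assumes "densely_defined (D::'a::chilbert set)" "B \<ge> 0"
    and "\<And>f. f \<in> D \<Longrightarrow> cmod (cinner f w) \<le> B * norm f"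
  shows "norm w \<le> B"
proof -
  obtain s where s: "\<And>n. s n \<in> D" "s \<longlonglongrightarrow> w"
    using assms(1) closure_sequential unfolding densely_defined_def by blast
  have "(\<lambda>n. cmod (cinner (s n) w)) \<longlonglongrightarrow> cmod (cinner w w)"
    by (intro tendsto_norm tendsto_cinner[OF s(2) tendsto_const])
  moreover have "(\<lambda>n. B * norm (s n)) \<longlonglongrightarrow> B * norm w"
    by (intro tendsto_mult tendsto_const tendsto_norm s(2))
  ultimately have "cmod (cinner w w) \<le> B * norm w"
    using assms(3) s(1) by (blast intro: LIMSEQ_le)
  then have "(norm w)\<^sup>2 \<le> B * norm w" by (simp add: cinner_self norm_power)
  then show ?thesis using assms(2)
    by (cases "norm w = 0") (auto simp: power2_eq_square mult_le_cancel_right)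
qed

lemma adj_cinner:
  assumes "g \<in> adj_dom D A" "f \<in> D"
  shows "cinner (A f) g = cinner f (adj D A g)"
proof -
  have "\<exists>h. \<forall>f\<in>D. cinner (A f) g = cinner f h" using assms(1) unfolding adj_dom_def by blast
  from someI_ex[OF this] show ?thesis using assms(2) unfolding adj_def by blast
qed

lemma adj_eqI:
  assumes "densely_defined D" "\<And>f. f \<in> D \<Longrightarrow> cinner (A f) g = cinner f h"
  shows "g \<in> adj_dom D A" "adj D A g = (h::'a::chilbert)"
proof -
  show g: "g \<in> adj_dom D A" using assms(2) unfolding adj_dom_def by blast
  show "adj D A g = h"
    using dense_cinner_eq[OF assms(1)] adj_cinner[OF g] assms(2) by metis
qed

lemma adj_diff:
  assumes "densely_defined D" "g1 \<in> adj_dom D A" "g2 \<in> adj_dom D A"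
  shows "adj D A (g1 - g2) = adj D A g1 - adj D A (g2::'a::chilbert)"
  using adj_cinner[OF assms(2)] adj_cinner[OF assms(3)]
  by (intro adj_eqI(2)[OF assms(1)]) (simp add: cinner_diff_right)

lemma graph_subset_closure: "f \<in> D \<Longrightarrow> (f, A f) \<in> closure (graph D A)"
  using closure_subset[of "graph D A"] by (auto simp: graph_def)

lemma closure_graph_add:
  assumes "lin_op D (A::'a::chilbert \<Rightarrow> 'a)" "p \<in> closure (graph D A)" "q \<in> closure (graph D A)"
  shows "p + q \<in> closure (graph D A)"
proof -
  let ?s = "\<lambda>pq. fst pq + snd pq :: 'a \<times> 'a"
  have sD: "is_subspace D" using assms(1) unfolding lin_op_def by blast
  have "?s ` (graph D A \<times> graph D A) \<subseteq> graph D A"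
  proof
    fix z assume "z \<in> ?s ` (graph D A \<times> graph D A)"
    then obtain x y where "x \<in> D" "y \<in> D" "z = (x + y, A x + A y)" unfolding graph_def by auto
    then show "z \<in> graph D A"
      using lin_opD(2)[OF assms(1)] is_subspaceD(2)[OF sD] unfolding graph_def by auto
  qed
  then have "?s ` closure (graph D A \<times> graph D A) \<subseteq> closure (graph D A)"
    using closure_subset by (intro image_closure_subset continuous_on_add continuous_on_fst
        continuous_on_snd continuous_on_id) auto
  moreover have "(p, q) \<in> closure (graph D A \<times> graph D A)"
    using assms(2,3) by (simp add: closure_Times)
  ultimately have "?s (p, q) \<in> closure (graph D A)" by blast
  then show ?thesis by simp
qed

lemma closure_graph_scaleC:
  assumes "lin_op D (A::'a::chilbert \<Rightarrow> 'a)" "(x, y) \<in> closure (graph D A)"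
  shows "(scaleC c x, scaleC c y) \<in> closure (graph D A)"
proof -
  let ?s = "\<lambda>p. (scaleC c (fst p), scaleC c (snd p) :: 'a)"
  have sD: "is_subspace D" using assms(1) unfolding lin_op_def by blast
  have "?s ` graph D A \<subseteq> graph D A"
  proof
    fix z assume "z \<in> ?s ` graph D A"
    then obtain x where "x \<in> D" "z = (scaleC c x, scaleC c (A x))" unfolding graph_def by auto
    then show "z \<in> graph D A"
      using lin_opD(3)[OF assms(1)] is_subspaceD(3)[OF sD] unfolding graph_def by auto
  qed
  then have "?s ` closure (graph D A) \<subseteq> closure (graph D A)"
    using closure_subset by (intro image_closure_subset continuous_on_Pair continuous_on_fst
        continuous_on_snd continuous_on_id bounded_linear.continuous_on[OF bounded_linear_scaleC]) auto
  then show ?thesis using assms(2) by auto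
qed

lemma closure_graph_sequence:
  assumes "(f, y) \<in> closure (graph D (A::'a::chilbert \<Rightarrow> 'a))"
  obtains a where "\<And>n. a n \<in> D" "a \<longlonglongrightarrow> f" "(\<lambda>n. A (a n)) \<longlonglongrightarrow> y"
proof -
  obtain s where s: "\<And>n. s n \<in> graph D A" "s \<longlonglongrightarrow> (f, y)"
    using closure_sequential[of "(f, y)" "graph D A"] assms by blast
  have "fst (s n) \<in> D \<and> snd (s n) = A (fst (s n))" for n
    using s(1)[of n] by (auto simp: graph_def)
  moreover have "(\<lambda>n. fst (s n)) \<longlonglongrightarrow> f" "(\<lambda>n. snd (s n)) \<longlonglongrightarrow> y"
    using tendsto_fst[OF s(2)] tendsto_snd[OF s(2)] by simp_all
  ultimately show ?thesis using that[of "\<lambda>n. fst (s n)"] by simp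
qed

lemma closure_op_eqI:
  assumes "closable D A" "(f, y) \<in> closure (graph D A)"
  shows "f \<in> closure_dom D A" "closure_op D A f = y"
proof -
  show "f \<in> closure_dom D A" using assms(2) unfolding closure_dom_def by force
  show "closure_op D A f = y"
    unfolding closure_op_def by (rule the_equality) (use assms in \<open>auto simp: closable_def\<close>)
qed

lemma closure_op_in_closure_graph:
  assumes "closable D A" "f \<in> closure_dom D A"
  shows "(f, closure_op D A f) \<in> closure (graph D A)"
proof -
  obtain y where "(f, y) \<in> closure (graph D A)" using assms(2) unfolding closure_dom_def by force
  with closure_op_eqI(2)[OF assms(1) this] show ?thesis by simp
qed

lemma graph_closure_op:
  assumes "closable D A"
  shows "graph (closure_dom D A) (closure_op D A) = closure (graph D A)"
proof
  show "graph (closure_dom D A) (closure_op D A) \<subseteq> closure (graph D A)"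
    using closure_op_in_closure_graph[OF assms] by (auto simp: graph_def)
  show "closure (graph D A) \<subseteq> graph (closure_dom D A) (closure_op D A)"
  proof
    fix p assume "p \<in> closure (graph D A)"
    moreover obtain f y where "p = (f, y)" by fastforce
    ultimately show "p \<in> graph (closure_dom D A) (closure_op D A)"
      using closure_op_eqI[OF assms] by (auto simp: graph_def)
  qed
qed

lemma subset_closure_dom: "D \<subseteq> closure_dom D A"
  using graph_subset_closure unfolding closure_dom_def by force

lemma closure_op_eq: "closable D A \<Longrightarrow> f \<in> D \<Longrightarrow> closure_op D A f = A f"
  using closure_op_eqI(2) graph_subset_closure by metis

lemma closable_closure_op: "closable D A \<Longrightarrow> closable (closure_dom D A) (closure_op D A)"
  unfolding closable_def[of "closure_dom D A"] graph_closure_op closure_closure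
  by (simp add: closable_def)

lemma densely_defined_closure_dom: "densely_defined D \<Longrightarrow> densely_defined (closure_dom D A)"
  unfolding densely_defined_def using closure_mono[OF subset_closure_dom[of D A]] by blast

lemma lin_op_closure_op:
  assumes "lin_op D (A::'a::chilbert \<Rightarrow> 'a)" "closable D A"
  shows "lin_op (closure_dom D A) (closure_op D A)"
proof -
  note in_graph = closure_op_in_closure_graph[OF assms(2)]
  note eqI = closure_op_eqI[OF assms(2)]
  have add: "x + y \<in> closure_dom D A \<and> closure_op D A (x + y) = closure_op D A x + closure_op D A y"
    if "x \<in> closure_dom D A" "y \<in> closure_dom D A" for x y
  proof -
    have "(x + y, closure_op D A x + closure_op D A y) \<in> closure (graph D A)"
      using closure_graph_add[OF assms(1) in_graph[OF that(1)] in_graph[OF that(2)]] by simp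
    from eqI[OF this] show ?thesis by blast
  qed
  have scale: "scaleC c x \<in> closure_dom D A \<and> closure_op D A (scaleC c x) = scaleC c (closure_op D A x)"
    if "x \<in> closure_dom D A" for c x
    using eqI[OF closure_graph_scaleC[OF assms(1) in_graph[OF that]]] by blast
  have "0 \<in> closure_dom D A"
    using assms(1) is_subspaceD(1) subset_closure_dom unfolding lin_op_def by blast
  then show ?thesis
    unfolding lin_op_def is_subspace_def using add scale by simp
qed

lemma adj_closure_op:
  assumes "densely_defined D" "closable D (A::'a::chilbert \<Rightarrow> 'a)" "g \<in> adj_dom D A"
  shows "g \<in> adj_dom (closure_dom D A) (closure_op D A)"
    "adj (closure_dom D A) (closure_op D A) g = adj D A g"
proof -
  have "cinner (closure_op D A f) g = cinner f (adj D A g)" if f: "f \<in> closure_dom D A" for f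
  proof -
    obtain a where a: "\<And>n. a n \<in> D" "a \<longlonglongrightarrow> f" "(\<lambda>n. A (a n)) \<longlonglongrightarrow> closure_op D A f"
      using closure_graph_sequence[OF closure_op_in_closure_graph[OF assms(2) f]] by blast
    have "(\<lambda>n. cinner (A (a n)) g) \<longlonglongrightarrow> cinner (closure_op D A f) g"
      by (rule tendsto_cinner[OF a(3) tendsto_const])
    moreover have "(\<lambda>n. cinner (a n) (adj D A g)) \<longlonglongrightarrow> cinner f (adj D A g)"
      by (rule tendsto_cinner[OF a(2) tendsto_const])
    ultimately show ?thesis
      using adj_cinner[OF assms(3) a(1)] LIMSEQ_unique by simp
  qed
  from adj_eqI[OF densely_defined_closure_dom[OF assms(1)] this]
  show "g \<in> adj_dom (closure_dom D A) (closure_op D A)"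
    "adj (closure_dom D A) (closure_op D A) g = adj D A g" by auto
qed

lemma adj_dom_closure_op:
  assumes "densely_defined D" "closable D (A::'a::chilbert \<Rightarrow> 'a)"
  shows "adj_dom (closure_dom D A) (closure_op D A) = adj_dom D A"
proof
  show "adj_dom D A \<subseteq> adj_dom (closure_dom D A) (closure_op D A)"
    using adj_closure_op(1)[OF assms] by blast
  show "adj_dom (closure_dom D A) (closure_op D A) \<subseteq> adj_dom D A"
  proof
    fix g assume "g \<in> adj_dom (closure_dom D A) (closure_op D A)"
    then obtain h where "\<forall>f\<in>closure_dom D A. cinner (closure_op D A f) g = cinner f h"
      unfolding adj_dom_def by blast
    then have "\<forall>f\<in>D. cinner (A f) g = cinner f h"
      using subset_closure_dom[of D A] closure_op_eq[OF assms(2)] by (metis subsetD)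
    then show "g \<in> adj_dom D A" unfolding adj_dom_def by blast
  qed
qed

text \<open>On a formally normal operator the adjoint is isometric to the operator, so it maps
  a graph-approximating sequence to a Cauchy sequence; the closedness of the adjoint does the rest.\<close>

lemma closure_dom_subset_adj_dom:
  assumes fn: "formally_normal D (A::'a::chilbert \<Rightarrow> 'a)" and f: "f \<in> closure_dom D A"
  shows "f \<in> adj_dom D A" "norm (adj D A f) = norm (closure_op D A f)"
proof -
  have lin: "lin_op D A" and dense: "densely_defined D" and cl: "closable D A"
    and sub: "D \<subseteq> adj_dom D A" and iso: "\<And>f. f \<in> D \<Longrightarrow> norm (adj D A f) = norm (A f)"
    using fn unfolding formally_normal_def by blast+
  obtain a where a: "\<And>n. a n \<in> D" "a \<longlonglongrightarrow> f" "(\<lambda>n. A (a n)) \<longlonglongrightarrow> closure_op D A f"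
    using closure_graph_sequence[OF closure_op_in_closure_graph[OF cl f]] by blast
  have sD: "is_subspace D" using lin unfolding lin_op_def by blast
  define b where "b n = adj D A (a n)" for n
  have "norm (b m - b n) = norm (A (a m) - A (a n))" for m n
    using adj_diff[OF dense sub[THEN subsetD, OF a(1)[of m]] sub[THEN subsetD, OF a(1)[of n]]]
      iso[OF is_subspaceD(5)[OF sD a(1)[of m] a(1)[of n]]] lin_opD(5)[OF lin a(1)[of m] a(1)[of n]]
    unfolding b_def by simp
  moreover have "Cauchy (\<lambda>n. A (a n))" using a(3) by (rule LIMSEQ_imp_Cauchy)
  ultimately have "Cauchy b" unfolding Cauchy_def dist_norm by simp
  then obtain h where h: "b \<longlonglongrightarrow> h" using Cauchy_convergent_iff convergent_def by blast
  have "cinner (A u) f = cinner u h" if u: "u \<in> D" for u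
  proof -
    have "(\<lambda>n. cinner (A u) (a n)) \<longlonglongrightarrow> cinner (A u) f"
      by (rule tendsto_cinner[OF tendsto_const a(2)])
    moreover have "(\<lambda>n. cinner u (b n)) \<longlonglongrightarrow> cinner u h"
      by (rule tendsto_cinner[OF tendsto_const h])
    ultimately show ?thesis
      using adj_cinner[OF sub[THEN subsetD, OF a(1)] u] LIMSEQ_unique unfolding b_def by simp
  qed
  from adj_eqI[OF dense this] have "f \<in> adj_dom D A" "adj D A f = h" by auto
  moreover have "(\<lambda>n. norm (b n)) \<longlonglongrightarrow> norm h" by (rule tendsto_norm[OF h])
  moreover have "(\<lambda>n. norm (b n)) \<longlonglongrightarrow> norm (closure_op D A f)"
    unfolding b_def using iso[OF a(1)] tendsto_norm[OF a(3)] by simp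
  ultimately show "f \<in> adj_dom D A" "norm (adj D A f) = norm (closure_op D A f)"
    using LIMSEQ_unique by auto
qed

lemma formally_normal_closure_op:
  assumes fn: "formally_normal D (A::'a::chilbert \<Rightarrow> 'a)"
  shows "formally_normal (closure_dom D A) (closure_op D A)"
proof -
  have lin: "lin_op D A" and dense: "densely_defined D" and cl: "closable D A"
    using fn unfolding formally_normal_def by blast+
  have "norm (adj (closure_dom D A) (closure_op D A) f) = norm (closure_op D A f)"
    if "f \<in> closure_dom D A" for f
    using closure_dom_subset_adj_dom[OF fn that] adj_closure_op(2)[OF dense cl] by simp
  then show ?thesis
    unfolding formally_normal_def adj_dom_closure_op[OF dense cl]
    using lin_op_closure_op[OF lin cl] densely_defined_closure_dom[OF dense] closable_closure_op[OF cl]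
      closure_dom_subset_adj_dom(1)[OF fn]
    by blast
qed

lemma essentially_normalI:
  assumes "formally_normal D (A::'a::chilbert \<Rightarrow> 'a)" "adj_dom D A \<subseteq> closure_dom D A"
  shows "essentially_normal D A"
proof -
  have "densely_defined D" "closable D A" using assms(1) unfolding formally_normal_def by blast+
  then have "adj_dom (closure_dom D A) (closure_op D A) = closure_dom D A"
    using adj_dom_closure_op closure_dom_subset_adj_dom(1)[OF assms(1)] assms(2) by blast
  then show ?thesis
    unfolding essentially_normal_def normal_op_def using formally_normal_closure_op[OF assms(1)] by simp
qed

section \<open>Spectral measures\<close>

lemma spectral_measure_countably_additive:
  assumes "spectral_measure (E::complex set \<Rightarrow> 'a::chilbert \<Rightarrow> 'a)"
    and "range F \<subseteq> sets borel" "disjoint_family F"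
  shows "(\<lambda>n. \<Sum>i<n. E (F i) f) \<longlonglongrightarrow> E (\<Union>i. F i) f"
  using assms unfolding spectral_measure_def by blast

lemma spectral_measure_empty:
  assumes "spectral_measure (E::complex set \<Rightarrow> 'a::chilbert \<Rightarrow> 'a)"
  shows "E {} f = 0"
proof -
  have "(\<lambda>n. \<Sum>i<n. E {} f) \<longlonglongrightarrow> E (\<Union>i::nat. {}) f"
    by (rule spectral_measure_countably_additive[OF assms]) (auto simp: disjoint_family_on_def)
  then have l: "(\<lambda>n. real n *\<^sub>R E {} f) \<longlonglongrightarrow> E {} f" by (simp add: sum_constant_scaleR)
  have "(\<lambda>n. real (Suc n) *\<^sub>R E {} f - real n *\<^sub>R E {} f) \<longlonglongrightarrow> E {} f - E {} f"
    by (rule tendsto_diff[OF LIMSEQ_Suc[OF l] l])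
  then have "(\<lambda>n. E {} f) \<longlonglongrightarrow> 0" by (simp add: algebra_simps)
  then show ?thesis using LIMSEQ_unique tendsto_const by metis
qed

lemma spectral_measure_finite_additive:
  fixes F :: "nat \<Rightarrow> complex set"
  assumes E: "spectral_measure (E::complex set \<Rightarrow> 'a::chilbert \<Rightarrow> 'a)"
    and F: "range F \<subseteq> sets borel" "disjoint_family F"
  shows "E (\<Union>i<n. F i) f = (\<Sum>i<n. E (F i) f)"
proof -
  define G where "G i = (if i < n then F i else {})" for i
  have "range G \<subseteq> sets borel" "disjoint_family G"
    using F by (auto simp: G_def disjoint_family_on_def)
  from spectral_measure_countably_additive[OF E this]
  have "(\<lambda>m. \<Sum>i<m. E (G i) f) \<longlonglongrightarrow> E (\<Union>i. G i) f" .
  moreover have "(\<Union>i. G i) = (\<Union>i<n. F i)" by (auto simp: G_def split: if_splits)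
  moreover have "(\<Sum>i<m. E (G i) f) = (\<Sum>i<n. E (F i) f)" if "m \<ge> n" for m
    using that by (intro sum.mono_neutral_cong_right) (auto simp: G_def spectral_measure_empty[OF E])
  then have "(\<lambda>m. \<Sum>i<m. E (G i) f) \<longlonglongrightarrow> (\<Sum>i<n. E (F i) f)"
    by (intro tendsto_eventually) (auto simp: eventually_sequentially)
  ultimately show ?thesis using LIMSEQ_unique by metis
qed

lemma spectral_measure_incseq:
  assumes E: "spectral_measure (E::complex set \<Rightarrow> 'a::chilbert \<Rightarrow> 'a)"
    and G: "incseq G" "range G \<subseteq> sets borel"
  shows "(\<lambda>n. E (G n) f) \<longlonglongrightarrow> E (\<Union>n. G n) f"
proof -
  note disj = sets.range_disjointed_sets[OF G(2)] disjoint_family_disjointed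
  have partial: "(\<Sum>i<Suc n. E (disjointed G i) f) = E (G n) f" for n
    using spectral_measure_finite_additive[OF E disj, of "Suc n" f] finite_UN_disjointed_eq[of G "Suc n"]
      mono_imp_UN_eq_last[OF G(1), of n]
    by (simp add: atLeast0LessThan lessThan_Suc_atMost)
  have "(\<lambda>n. \<Sum>i<n. E (disjointed G i) f) \<longlonglongrightarrow> E (\<Union>n. G n) f"
    using spectral_measure_countably_additive[OF E disj] by (simp add: UN_disjointed_eq)
  from LIMSEQ_Suc[OF this] show ?thesis unfolding partial .
qed

lemma spectral_measure_cball_tendsto:
  assumes E: "spectral_measure (E::complex set \<Rightarrow> 'a::chilbert \<Rightarrow> 'a)"
  shows "(\<lambda>n. E (cball 0 (real (Suc n))) f) \<longlonglongrightarrow> f"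
proof -
  have "z \<in> (\<Union>n. cball 0 (real (Suc n)))" for z :: complex
  proof -
    obtain n :: nat where "cmod z \<le> real n" using real_arch_simple by blast
    then have "z \<in> cball 0 (real (Suc n))" by (simp add: mem_cball)
    then show ?thesis by blast
  qed
  then have "(\<Union>n. cball 0 (real (Suc n))) = (UNIV :: complex set)" by blast
  moreover have "incseq (\<lambda>n. cball (0::complex) (real (Suc n)))"
    by (rule monoI, rule subset_cball) simp
  moreover have "range (\<lambda>n. cball (0::complex) (real (Suc n))) \<subseteq> sets borel"
    by (auto intro: borel_closed)
  moreover have "E UNIV f = f" using E unfolding spectral_measure_def by simp
  ultimately show ?thesis using spectral_measure_incseq[OF E] by metis
qed

lemma orth_proj_scaleR: "orth_proj (P::'a::chilbert \<Rightarrow> 'a) \<Longrightarrow> P (scaleR r x) = scaleR r (P x)"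
  unfolding orth_proj_def scaleR_eq_scaleC by blast

lemma orth_proj_norm_le:
  assumes "orth_proj (P::'a::chilbert \<Rightarrow> 'a)"
  shows "norm (P x) \<le> norm x"
proof -
  have "(norm (P x))\<^sup>2 = Re (cinner x (P x))"
    using assms unfolding orth_proj_def by (metis Re_cinner_self)
  also have "\<dots> \<le> norm x * norm (P x)" by (rule Re_cinner_le)
  finally show ?thesis
    by (metis mult_le_cancel_right norm_ge_zero not_le power2_eq_square mult_zero_left order.trans)
qed

section \<open>Graph sequences with bounded second components\<close>

lemma Cauchy_of_midpoint_norm_bounds:
  fixes y :: "nat \<Rightarrow> 'a::chilbert"
  assumes b: "convergent b" and r: "r \<longlonglongrightarrow> 0"
    and upper: "\<And>k. (norm (y k))\<^sup>2 \<le> b k + r k"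
    and lower: "\<And>j k. j \<le> k \<Longrightarrow> b j \<le> (norm (scaleR (1/2) (y j + y k)))\<^sup>2"
  shows "Cauchy y"
proof -
  have diff_bound: "(norm (y j - y k))\<^sup>2 \<le> 2 * (b k - b j) + 2 * r j + 2 * r k" if "j \<le> k" for j k
  proof -
    have "4 * b j \<le> (norm (y j + y k))\<^sup>2"
      using lower[OF that] by (simp add: power_divide)
    then show ?thesis
      using parallelogram_law[of "y j" "y k"] upper[of j] upper[of k] by argo
  qed
  show ?thesis
  proof (rule CauchyI)
    fix e :: real assume "e > 0"
    then have e: "e\<^sup>2 / 8 > 0" by simp
    obtain K1 where K1: "\<And>m n. m \<ge> K1 \<Longrightarrow> n \<ge> K1 \<Longrightarrow> norm (b m - b n) < e\<^sup>2 / 8"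
      using CauchyD[OF convergent_Cauchy[OF b] e] by blast
    obtain K2 where K2: "\<And>n. n \<ge> K2 \<Longrightarrow> r n < e\<^sup>2 / 8"
      using order_tendstoD(2)[OF r e] by (auto simp: eventually_sequentially)
    have "norm (y j - y k) < e" if "j \<le> k" "j \<ge> max K1 K2" for j k
    proof -
      have "\<bar>b k - b j\<bar> < e\<^sup>2 / 8" "r j < e\<^sup>2 / 8" "r k < e\<^sup>2 / 8"
        using K1[of k j] K2[of j] K2[of k] that by auto
      then have "(norm (y j - y k))\<^sup>2 < e\<^sup>2"
        using diff_bound[OF that(1)] abs_ge_self[of "b k - b j"] e by argo
      then show ?thesis using \<open>e > 0\<close> by (simp add: power2_less_imp_less)
    qed
    then show "\<exists>M. \<forall>m\<ge>M. \<forall>n\<ge>M. norm (y m - y n) < e"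
      by (metis nle_le norm_minus_commute)
  qed
qed

lemma exists_square_less_Inf_square_add:
  fixes S :: "real set"
  assumes "S \<noteq> {}" "\<And>s. s \<in> S \<Longrightarrow> 0 \<le> s" "0 < e"
  shows "\<exists>s\<in>S. s\<^sup>2 < (Inf S)\<^sup>2 + e"
proof -
  have "0 \<le> Inf S" using assms(1,2) by (intro cInf_greatest) auto
  then have "Inf S < sqrt ((Inf S)\<^sup>2 + e)" using assms(3) by (simp add: real_less_rsqrt)
  then obtain s where s: "s \<in> S" "s < sqrt ((Inf S)\<^sup>2 + e)"
    using cInf_lessD[OF assms(1)] by blast
  have "s\<^sup>2 < (sqrt ((Inf S)\<^sup>2 + e))\<^sup>2"
    using s assms(2) by (intro power_strict_mono) auto
  also have "\<dots> = (Inf S)\<^sup>2 + e" using assms(3) by simp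
  finally show ?thesis using s(1) by blast
qed

text \<open>Near-minimizers of the norm of the second component form a Cauchy sequence, by the
  parallelogram law.\<close>

lemma nested_midpoint_convex_Cauchy_snd:
  fixes T :: "nat \<Rightarrow> ('a::chilbert \<times> 'a) set"
  assumes T_mono: "\<And>j k. j \<le> k \<Longrightarrow> T k \<subseteq> T j"
    and T_mid: "\<And>k p q. p \<in> T k \<Longrightarrow> q \<in> T k \<Longrightarrow> scaleR (1/2) (p + q) \<in> T k"
    and T_bounded: "\<And>k. \<exists>p\<in>T k. norm (snd p) \<le> M"
  shows "\<exists>x. (\<forall>k. x k \<in> T k) \<and> Cauchy (\<lambda>k. snd (x k))"
proof -
  define r where "r k = inverse (real (Suc k))" for k
  have r: "r \<longlonglongrightarrow> 0" "\<And>k. r k > 0"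
    unfolding r_def using LIMSEQ_inverse_real_of_nat by auto
  define a where "a k = Inf ((\<lambda>p. norm (snd p)) ` T k)" for k
  have bdd: "bdd_below ((\<lambda>p. norm (snd p)) ` T k)" for k by (rule bdd_belowI[of _ 0]) auto
  have a_le: "p \<in> T k \<Longrightarrow> a k \<le> norm (snd p)" for p k
    unfolding a_def using bdd by (intro cInf_lower) auto
  have a_nonneg: "0 \<le> a k" for k
    unfolding a_def using T_bounded[of k] by (intro cInf_greatest) auto
  have a_mono: "a j \<le> a k" if "j \<le> k" for j k
    unfolding a_def using T_bounded[of k] T_mono[OF that] bdd[of j] by (intro cInf_superset_mono) auto
  define b where "b k = (a k)\<^sup>2" for k
  have "convergent b"
  proof (rule Bseq_monoseq_convergent)
    have "a k \<le> M" for k using T_bounded[of k] a_le by force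
    then show "Bseq b"
      using a_nonneg by (intro BseqI'[of _ "M\<^sup>2"]) (simp add: b_def power_mono)
    show "monoseq b" using a_mono a_nonneg unfolding b_def monoseq_def by (auto intro: power_mono)
  qed
  have "\<exists>p\<in>T k. (norm (snd p))\<^sup>2 < b k + r k" for k
  proof -
    have "(\<lambda>p. norm (snd p)) ` T k \<noteq> {}" using T_bounded[of k] by blast
    moreover have "\<And>s. s \<in> (\<lambda>p. norm (snd p)) ` T k \<Longrightarrow> 0 \<le> s" by auto
    ultimately have "\<exists>s\<in>(\<lambda>p. norm (snd p)) ` T k. s\<^sup>2 < (Inf ((\<lambda>p. norm (snd p)) ` T k))\<^sup>2 + r k"
      by (rule exists_square_less_Inf_square_add[OF _ _ r(2)[of k]])
    then show ?thesis unfolding b_def a_def by auto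
  qed
  then obtain x where x: "\<And>k. x k \<in> T k" "\<And>k. (norm (snd (x k)))\<^sup>2 < b k + r k" by metis
  have "Cauchy (\<lambda>k. snd (x k))"
  proof (rule Cauchy_of_midpoint_norm_bounds[OF \<open>convergent b\<close> r(1)])
    show "(norm (snd (x k)))\<^sup>2 \<le> b k + r k" for k using x(2)[of k] by simp
    show "b j \<le> (norm (scaleR (1/2) (snd (x j) + snd (x k))))\<^sup>2" if "j \<le> k" for j k
    proof -
      have "scaleR (1/2) (x j + x k) \<in> T j" using T_mid x(1) T_mono[OF that] by blast
      then have "a j \<le> norm (scaleR (1/2) (snd (x j) + snd (x k)))" using a_le by fastforce
      then show ?thesis using a_nonneg[of j] unfolding b_def by (rule power_mono)
    qed
  qed
  with x(1) show ?thesis by blast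
qed

lemma closed_midpoint_convex_bounded_snd:
  fixes \<Gamma> :: "('a::chilbert \<times> 'a) set"
  assumes closed: "closed \<Gamma>" and mid: "\<And>p q. p \<in> \<Gamma> \<Longrightarrow> q \<in> \<Gamma> \<Longrightarrow> scaleR (1/2) (p + q) \<in> \<Gamma>"
    and uv: "\<And>n. (u n, v n) \<in> \<Gamma>" and u: "u \<longlonglongrightarrow> g" and v: "\<And>n. norm (v n) \<le> M"
  shows "\<exists>y. (g, y) \<in> \<Gamma>"
proof -
  define r where "r k = inverse (real (Suc k))" for k
  have r: "r \<longlonglongrightarrow> 0" "\<And>k. r k > 0" "\<And>j k. j \<le> k \<Longrightarrow> r k \<le> r j"
    unfolding r_def using LIMSEQ_inverse_real_of_nat by (auto intro!: le_imp_inverse_le)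
  define T where "T k = {p \<in> \<Gamma>. norm (fst p - g) \<le> r k}" for k
  have T_mono: "j \<le> k \<Longrightarrow> T k \<subseteq> T j" for j k using r(3) unfolding T_def by force
  have T_mid: "scaleR (1/2) (p + q) \<in> T k" if "p \<in> T k" "q \<in> T k" for k p q
  proof -
    have "fst (scaleR (1/2) (p + q)) - g = scaleR (1/2) (fst p - g) + scaleR (1/2) (fst q - g)"
      by (simp add: algebra_simps flip: scaleR_add_left)
    then have "norm (fst (scaleR (1/2) (p + q)) - g) \<le> (1/2) * norm (fst p - g) + (1/2) * norm (fst q - g)"
      using norm_triangle_ineq[of "scaleR (1/2) (fst p - g)" "scaleR (1/2) (fst q - g)"] by simp
    also have "\<dots> \<le> r k" using that unfolding T_def by auto
    finally show ?thesis using mid that unfolding T_def by blast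
  qed
  have T_bounded: "\<exists>p\<in>T k. norm (snd p) \<le> M" for k
  proof -
    obtain n where "norm (u n - g) < r k" using u[unfolded LIMSEQ_iff] r(2) by blast
    then show ?thesis using uv[of n] v[of n] unfolding T_def by force
  qed
  obtain x where x: "\<And>k. x k \<in> T k" "Cauchy (\<lambda>k. snd (x k))"
    using nested_midpoint_convex_Cauchy_snd[where T = T, OF T_mono T_mid T_bounded] by blast
  then obtain y where y: "(\<lambda>k. snd (x k)) \<longlonglongrightarrow> y" using Cauchy_convergent_iff convergent_def by blast
  have "norm (fst (x k) - g) \<le> r k" for k using x(1)[of k] unfolding T_def by blast
  then have "(\<lambda>k. fst (x k) - g) \<longlonglongrightarrow> 0"
    by (intro Lim_null_comparison[OF _ r(1)] always_eventually allI)
  then have "(\<lambda>k. fst (x k)) \<longlonglongrightarrow> g" by (simp add: LIM_zero_iff)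
  from tendsto_Pair[OF this y] have "x \<longlonglongrightarrow> (g, y)" by simp
  moreover have "x k \<in> \<Gamma>" for k using x(1)[of k] unfolding T_def by blast
  ultimately show ?thesis using closed_sequentially[OF closed] by blast
qed

section \<open>Approximation by spectral projections\<close>

lemma norm_le_mult_norm_of_unit_ball:
  assumes D: "is_subspace (D::'a::chilbert set)"
    and hom: "\<And>r x. x \<in> D \<Longrightarrow> T (scaleR r x) = scaleR r (T x :: 'b::real_normed_vector)"
    and bound: "\<And>x. x \<in> D \<Longrightarrow> norm x \<le> 1 \<Longrightarrow> norm (T x) \<le> C"
    and x: "x \<in> D"
  shows "norm (T x) \<le> C * norm x"
proof (cases "x = 0")
  case True
  then show ?thesis using hom[OF x, of 0] by simp
next
  case False
  have "norm (T (scaleR (1 / norm x) x)) \<le> C"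
    using False by (intro bound is_subspaceD(4)[OF D x]) simp
  then have "norm (T x) / norm x \<le> C" using hom[OF x] by simp
  with False show ?thesis by (simp add: divide_le_eq mult.commute)
qed

lemma commutator_bound_scaled:
  assumes lin: "lin_op D (A::'a::chilbert \<Rightarrow> 'a)" and P: "orth_proj P" and PD: "\<And>x. P x \<in> D"
    and bound: "\<And>f. f \<in> D \<Longrightarrow> norm f \<le> 1 \<Longrightarrow> norm (A (P f) - P (A f)) \<le> C"
  shows "0 \<le> C" "f \<in> D \<Longrightarrow> norm (A (P f) - P (A f)) \<le> C * norm f"
proof -
  have sD: "is_subspace D" using lin unfolding lin_op_def by blast
  show "0 \<le> C"
    using bound[OF is_subspaceD(1)[OF sD]] lin_opD(1)[OF lin] orth_proj_scaleR[OF P, of 0 0] by simp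
  show "f \<in> D \<Longrightarrow> norm (A (P f) - P (A f)) \<le> C * norm f"
  proof (rule norm_le_mult_norm_of_unit_ball[OF sD _ bound])
    show "A (P (scaleR r x)) - P (A (scaleR r x)) = scaleR r (A (P x) - P (A x))" if "x \<in> D" for r x
      using lin_opD(4)[OF lin that] lin_opD(4)[OF lin PD] orth_proj_scaleR[OF P]
      by (simp add: scaleR_diff_right)
  qed
qed

lemma adj_commutator_bound:
  assumes fn: "formally_normal D (A::'a::chilbert \<Rightarrow> 'a)" and P: "orth_proj P"
    and PD: "\<And>x. P x \<in> D" and C: "0 \<le> C"
    and comm: "\<And>f. f \<in> D \<Longrightarrow> norm (A (P f) - P (A f)) \<le> C * norm f"
    and g: "g \<in> adj_dom D A"
  shows "norm (adj D A (P g) - P (adj D A g)) \<le> C * norm g"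
proof (rule dense_cinner_bound)
  have dense: "densely_defined D" and sub: "D \<subseteq> adj_dom D A"
    using fn unfolding formally_normal_def by blast+
  show "densely_defined D" by (rule dense)
  show "0 \<le> C * norm g" using C by simp
  fix f assume f: "f \<in> D"
  have P_sym: "cinner (P x) y = cinner x (P y)" for x y using P unfolding orth_proj_def by blast
  have "cinner f (adj D A (P g) - P (adj D A g)) = cinner (P (A f) - A (P f)) g"
    using adj_cinner[OF sub[THEN subsetD, OF PD] f] adj_cinner[OF g PD]
    by (simp add: cinner_diff_left cinner_diff_right P_sym)
  also have "cmod \<dots> \<le> norm (A (P f) - P (A f)) * norm g"
    using Cauchy_Schwarz_cinner by (metis norm_minus_commute)
  also have "\<dots> \<le> C * norm g * norm f"
    using mult_right_mono[OF comm[OF f] norm_ge_zero[of g]] by (simp add: mult_ac)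
  finally show "cmod (cinner f (adj D A (P g) - P (adj D A g))) \<le> C * norm g * norm f" .
qed

lemma adj_dom_subset_closure_dom:
  fixes P :: "nat \<Rightarrow> 'a::chilbert \<Rightarrow> 'a"
  assumes fn: "formally_normal D A" and P: "\<And>n. orth_proj (P n)"
    and conv: "\<And>g. (\<lambda>n. P n g) \<longlonglongrightarrow> g" and PD: "\<And>n x. P n x \<in> D" and C: "0 \<le> C"
    and comm: "\<And>n f. f \<in> D \<Longrightarrow> norm (A (P n f) - P n (A f)) \<le> C * norm f"
  shows "adj_dom D A \<subseteq> closure_dom D A"
proof
  fix g assume g: "g \<in> adj_dom D A"
  have lin: "lin_op D A" and cl: "closable D A"
    and iso: "\<And>f. f \<in> D \<Longrightarrow> norm (adj D A f) = norm (A f)"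
    using fn unfolding formally_normal_def by blast+
  have bounded: "norm (A (P n g)) \<le> norm (adj D A g) + C * norm g" for n
  proof -
    have "norm (A (P n g)) = norm (P n (adj D A g) + (adj D A (P n g) - P n (adj D A g)))"
      using iso[OF PD] by simp
    also have "\<dots> \<le> norm (P n (adj D A g)) + norm (adj D A (P n g) - P n (adj D A g))"
      by (rule norm_triangle_ineq)
    also have "\<dots> \<le> norm (adj D A g) + C * norm g"
      using orth_proj_norm_le[OF P] adj_commutator_bound[OF fn P PD C comm g] by (rule add_mono)
    finally show ?thesis .
  qed
  have mid: "scaleR (1/2) (p + q) \<in> closure (graph D A)"
    if "p \<in> closure (graph D A)" "q \<in> closure (graph D A)" for p q
  proof -
    obtain a b where ab: "p + q = (a, b)" by fastforce
    have "(scaleC (of_real (1/2)) a, scaleC (of_real (1/2)) b) \<in> closure (graph D A)"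
      using closure_graph_scaleC[OF lin] closure_graph_add[OF lin that] ab by metis
    then show ?thesis unfolding scaleC_of_real ab by simp
  qed
  then obtain y where "(g, y) \<in> closure (graph D A)"
    using closed_midpoint_convex_bounded_snd[where u = "\<lambda>n. P n g" and v = "\<lambda>n. A (P n g)",
        OF closed_closure mid graph_subset_closure[OF PD] conv bounded]
    by blast
  then show "g \<in> closure_dom D A" by (rule closure_op_eqI(1)[OF cl])
qed

theorem proposition6:
  fixes D :: "'a::chilbert set" and A :: "'a \<Rightarrow> 'a"
    and DN :: "'a set" and N :: "'a \<Rightarrow> 'a"
    and E :: "complex set \<Rightarrow> 'a \<Rightarrow> 'a"
  assumes "formally_normal D A"
    and "normal_op DN N"
    and "spectral_measure_of DN N E"
    and "(\<Union>n\<in>{1::nat..}. range (E (cball 0 (real n)))) \<subseteq> D"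
    and "\<exists>C::real. \<forall>n::nat. n \<ge> 1 \<longrightarrow>
           (\<forall>f \<in> {f \<in> D. E (cball 0 (real n)) f \<in> D}. norm f \<le> 1 \<longrightarrow>
              norm (A (E (cball 0 (real n)) f) - E (cball 0 (real n)) (A f)) \<le> C)"
  shows "essentially_normal D A"
proof -
  define P where "P n = E (cball 0 (real (Suc n)))" for n
  have E: "spectral_measure E" using assms(3) unfolding spectral_measure_of_def by blast
  have P: "orth_proj (P n)" for n using E unfolding spectral_measure_def P_def by (simp add: borel_closed)
  have PD: "P n x \<in> D" for n x using assms(4) unfolding P_def by force
  have lin: "lin_op D A" using assms(1) unfolding formally_normal_def by blast
  obtain C where C0: "\<forall>n::nat. n \<ge> 1 \<longrightarrow>
      (\<forall>f \<in> {f \<in> D. E (cball 0 (real n)) f \<in> D}. norm f \<le> 1 \<longrightarrow>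
         norm (A (E (cball 0 (real n)) f) - E (cball 0 (real n)) (A f)) \<le> C)"
    using assms(5) by blast
  have C: "norm (A (P n f) - P n (A f)) \<le> C" if "f \<in> D" "norm f \<le> 1" for n f
    using C0[rule_format, of "Suc n" f] PD[of n f] that unfolding P_def by simp
  have conv: "(\<lambda>n. P n g) \<longlonglongrightarrow> g" for g
    unfolding P_def by (rule spectral_measure_cball_tendsto[OF E])
  have "0 \<le> C" by (rule commutator_bound_scaled(1)[of D A "P 0" C, OF lin P[of 0] PD[of 0] C[of _ 0]])
  moreover have "norm (A (P n f) - P n (A f)) \<le> C * norm f" if "f \<in> D" for n f
    by (rule commutator_bound_scaled(2)[of D A "P n" C, OF lin P[of n] PD[of n] C[of _ n] that])
  ultimately have "adj_dom D A \<subseteq> closure_dom D A"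
    by (rule adj_dom_subset_closure_dom[OF assms(1) P conv PD])
  then show ?thesis by (rule essentially_normalI[OF assms(1)])
qed

end
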